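(* Let $\mu>0$ and $f\in C^2([0,1])$. Then for every $x\in[0,1]$, $$\lim_{n\to+\infty} n\left[\mathscr{L}_n^K(f,x)-f(x)\right]=\ln_\mu(x)\left[f_\mu'(x)\left(\frac12+\frac{x-x^2}{2(1+\mu)}-x\right)+f_\mu''(x)\,\frac{x-x^2}{2}\right].$$
   Context: Fix $\mu>0$. Let $\ln_\mu(x):=\ln(1+\mu+x)$ for $x\in[0,1]$, and for $f:[0,1]\to\mathbb{R}$ let $f_\mu(x):=f(x)/\ln_\mu(x)$. Let $p_{n,k}(y):=\binom{n}{k}y^k(1-y)^{n-k}$ and $a_{n+1}(x):=\dfrac{\ln\left(1+\frac{x}{(n+1)(1+\mu)}\right)}{\ln\left(1+\frac{1}{(n+1)(1+\mu)}\right)}$, $x\in[0,1]$. For $n\in\mathbb{N}$ define $\mathscr{L}_n^K(f,x)=\mathscr{L}_n^K f(x):=\ln_\mu(x)\sum_{k=0}^n p_{n,k}(a_{n+1}(x))\,(n+1)\int_{k/(n+1)}^{(k+1)/(n+1)} f_\mu(t)\,dt$, $x\in[0,1]$. *)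

theory Defs
  imports "HOL-Analysis.Analysis"
begin

definition ln_mu :: "real \<Rightarrow> real \<Rightarrow> real" where
  "ln_mu \<mu> x = ln (1 + \<mu> + x)"

definition f_mu :: "real \<Rightarrow> (real \<Rightarrow> real) \<Rightarrow> real \<Rightarrow> real" where
  "f_mu \<mu> f x = f x / ln_mu \<mu> x"

definition p_nk :: "nat \<Rightarrow> nat \<Rightarrow> real \<Rightarrow> real" where
  "p_nk n k y = real (n choose k) * y ^ k * (1 - y) ^ (n - k)"

text \<open>a_{n+1}(x); the argument n is the index n (so n+1 appears inside).\<close>
definition a_succ :: "real \<Rightarrow> nat \<Rightarrow> real \<Rightarrow> real" where
  "a_succ \<mu> n x = ln (1 + x / ((real n + 1) * (1 + \<mu>))) / ln (1 + 1 / ((real n + 1) * (1 + \<mu>)))"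

definition LK :: "real \<Rightarrow> nat \<Rightarrow> (real \<Rightarrow> real) \<Rightarrow> real \<Rightarrow> real" where
  "LK \<mu> n f x = ln_mu \<mu> x * (\<Sum>k=0..n. p_nk n k (a_succ \<mu> n x) *
      ((real n + 1) * integral {real k / (real n + 1) .. (real k + 1) / (real n + 1)} (f_mu \<mu> f)))"

end

theory Submission
  imports Defs "HOL-Probability.Hoeffding" "HOL-Real_Asymp.Real_Asymp"
begin

(* Since ln_mu is positive, L_n^K f (x) = ln_mu x * K_n g (a_{n+1} x), where g = f_mu and K_n is
   the classical Kantorovich operator. Expanding g around x by Taylor's formula with Peano
   remainder, the limit is read off from the first two central moments of K_n, evaluated at the
   node y_n = a_{n+1} x, which satisfies n (y_n - x) --> x (1 - x) / (2 (1 + mu)).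
   The remainder contributes o(1/n): near x it is at most eps (t - x)^2, and the Bernstein
   mass away from y_n is exponentially small by Hoeffding's inequality. *)

section \<open>Kantorovich operators and their central moments\<close>

definition kantorovich_cell :: "nat \<Rightarrow> nat \<Rightarrow> real set" where
  "kantorovich_cell n k = {real k / (real n + 1) .. (real k + 1) / (real n + 1)}"

definition kantorovich :: "nat \<Rightarrow> (real \<Rightarrow> real) \<Rightarrow> real \<Rightarrow> real" where
  "kantorovich n h y =
     (\<Sum>k=0..n. p_nk n k y * ((real n + 1) * integral (kantorovich_cell n k) h))"

lemma p_nk_eq_Bernstein: "p_nk n k y = Bernstein n k y"
  by (simp add: p_nk_def Bernstein_def)

lemma p_nk_nonneg: "y \<in> {0..1} \<Longrightarrow> 0 \<le> p_nk n k y"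
  by (simp add: p_nk_eq_Bernstein Bernstein_nonneg)

lemma sum_p_nk_quadratic:
  "(\<Sum>k=0..n. p_nk n k y * (real k * (real k - 1) * A + real k * B + C)) =
     real n * (real n - 1) * y^2 * A + real n * y * B + C"
proof -
  have "(\<Sum>k=0..n. p_nk n k y * (real k * (real k - 1) * A + real k * B + C)) =
      (\<Sum>k\<le>n. real k * (real k - 1) * Bernstein n k y * A + real k * Bernstein n k y * B
                + Bernstein n k y * C)"
    by (simp add: atLeast0AtMost p_nk_eq_Bernstein algebra_simps)
  also have "\<dots> = real n * (real n - 1) * y^2 * A + real n * y * B + C"
    by (simp only: sum.distrib sum_distrib_right[symmetric]
        sum_kk_Bernstein sum_k_Bernstein sum_Bernstein mult_1)
  finally show ?thesis .
qed

lemma kantorovich_cell_subset: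
  assumes "k \<le> n"
  shows "kantorovich_cell n k \<subseteq> {0..1}"
proof -
  have "(real k + 1) / (real n + 1) \<le> 1" using assms by (simp add: divide_le_eq_1)
  then show ?thesis by (simp add: kantorovich_cell_def)
qed

lemma integrable_on_kantorovich_cell:
  fixes h :: "real \<Rightarrow> real"
  assumes "continuous_on {0..1} h" "k \<le> n"
  shows "h integrable_on kantorovich_cell n k"
  using continuous_on_subset[OF assms(1) kantorovich_cell_subset[OF assms(2)]]
  unfolding kantorovich_cell_def by (rule integrable_continuous_interval)

lemma scaled_integral_kantorovich_cell_const:
  "(real n + 1) * integral (kantorovich_cell n k) (\<lambda>t. c) = c"
proof -
  have "real k / (real n + 1) \<le> (real k + 1) / (real n + 1)"
    by (simp add: divide_right_mono)
  then show ?thesis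
    by (simp add: kantorovich_cell_def diff_divide_distrib[symmetric])
qed

lemma integral_shifted_power:
  fixes a b x :: real
  assumes "a \<le> b"
  shows "integral {a..b} (\<lambda>t. (t - x)^j) = ((b - x)^Suc j - (a - x)^Suc j) / real (Suc j)"
proof -
  let ?F = "\<lambda>t. (t - x)^Suc j / real (Suc j)"
  have "((\<lambda>t. (t - x)^j) has_integral (?F b - ?F a)) {a..b}"
  proof (rule fundamental_theorem_of_calculus[OF assms])
    fix t
    have "(?F has_real_derivative (t - x)^j) (at t within {a..b})"
      by (rule derivative_eq_intros refl | simp)+
    then show "(?F has_vector_derivative (t - x)^j) (at t within {a..b})"
      by (simp add: has_real_derivative_iff_has_vector_derivative)
  qed
  then show ?thesis by (simp add: integral_unique diff_divide_distrib)
qed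

lemma scaled_integral_kantorovich_cell_power:
  "(real n + 1) * integral (kantorovich_cell n k) (\<lambda>t. (t - x)^j) =
     (real n + 1) * (((real k + 1) / (real n + 1) - x)^Suc j - (real k / (real n + 1) - x)^Suc j)
       / real (Suc j)"
  unfolding kantorovich_cell_def by (subst integral_shifted_power) (auto simp: divide_right_mono)

lemma kantorovich_const: "kantorovich n (\<lambda>t. c) y = c"
  using sum_p_nk_quadratic[of n y 0 0 c]
  by (simp add: kantorovich_def scaled_integral_kantorovich_cell_const)

lemma kantorovich_add:
  assumes "continuous_on {0..1} h1" "continuous_on {0..1} h2"
  shows "kantorovich n (\<lambda>t. h1 t + h2 t) y = kantorovich n h1 y + kantorovich n h2 y"
proof -
  have "integral (kantorovich_cell n k) (\<lambda>t. h1 t + h2 t) =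
      integral (kantorovich_cell n k) h1 + integral (kantorovich_cell n k) h2" if "k \<in> {0..n}" for k
    using that by (intro integral_add integrable_on_kantorovich_cell assms) auto
  then show ?thesis unfolding kantorovich_def by (simp add: sum.distrib algebra_simps)
qed

lemma kantorovich_cmult: "kantorovich n (\<lambda>t. c * h t) y = c * kantorovich n h y"
  unfolding kantorovich_def by (simp add: sum_distrib_left algebra_simps)

lemma kantorovich_linear_moment:
  "kantorovich n (\<lambda>t. t - x) y = real n * y / (real n + 1) + 1 / (2 * (real n + 1)) - x"
proof -
  \<comment> \<open>Stated for an abstract N > 0, which lets field_simps clear the denominators n + 1.\<close>
  have cell: "N * (((k + 1) / N - x)^2 - (k / N - x)^2) / 2 =
      k * (k - 1) * 0 + k * (1 / N) + (1 / (2 * N) - x)" if "N > 0" for N k :: real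
    using that by (simp add: field_simps power2_eq_square)
  have "(real n + 1) * integral (kantorovich_cell n k) (\<lambda>t. t - x) =
      real k * (real k - 1) * 0 + real k * (1 / (real n + 1)) + (1 / (2 * (real n + 1)) - x)" for k
  proof -
    have "(real n + 1) * integral (kantorovich_cell n k) (\<lambda>t. t - x) =
        (real n + 1) * (((real k + 1) / (real n + 1) - x)^2 - (real k / (real n + 1) - x)^2) / 2"
      using scaled_integral_kantorovich_cell_power[of n k x 1] by (simp add: power2_eq_square)
    then show ?thesis using cell[of "real n + 1" "real k"] by simp
  qed
  then show ?thesis unfolding kantorovich_def by (simp only: sum_p_nk_quadratic) simp
qed

lemma kantorovich_quadratic_moment:
  "kantorovich n (\<lambda>t. (t - x)^2) y =
     real n * (real n - 1) * y^2 * (1 / (real n + 1)^2)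
     + real n * y * (2 / (real n + 1)^2 - 2 * x / (real n + 1))
     + (x^2 - x / (real n + 1) + 1 / (3 * (real n + 1)^2))"
proof -
  have cell: "N * (((k + 1) / N - x)^3 - (k / N - x)^3) / 3 =
      k * (k - 1) * (1 / N^2) + k * (2 / N^2 - 2 * x / N) + (x^2 - x / N + 1 / (3 * N^2))"
    if "N > 0" for N k :: real
    using that by (simp add: field_simps power2_eq_square power3_eq_cube)
  have "(real n + 1) * integral (kantorovich_cell n k) (\<lambda>t. (t - x)^2) =
      real k * (real k - 1) * (1 / (real n + 1)^2)
      + real k * (2 / (real n + 1)^2 - 2 * x / (real n + 1))
      + (x^2 - x / (real n + 1) + 1 / (3 * (real n + 1)^2))" for k
  proof -
    have "(real n + 1) * integral (kantorovich_cell n k) (\<lambda>t. (t - x)^2) =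
        (real n + 1) * (((real k + 1) / (real n + 1) - x)^3 - (real k / (real n + 1) - x)^3) / 3"
      using scaled_integral_kantorovich_cell_power[of n k x 2] by (simp add: numeral_3_eq_3)
    then show ?thesis using cell[of "real n + 1" "real k"] by simp
  qed
  then show ?thesis unfolding kantorovich_def by (simp only: sum_p_nk_quadratic)
qed

lemma LIMSEQ_of_scaled_difference:
  assumes "(\<lambda>n. real n * (y n - x)) \<longlonglongrightarrow> c"
  shows "y \<longlonglongrightarrow> x"
proof -
  have "(\<lambda>n. (1 / real n) * (real n * (y n - x))) \<longlonglongrightarrow> 0"
    using tendsto_mult[OF lim_1_over_n assms] by simp
  then have "(\<lambda>n. y n - x) \<longlonglongrightarrow> 0"
  proof (rule Lim_transform_eventually)
    show "\<forall>\<^sub>F n in sequentially. 1 / real n * (real n * (y n - x)) = y n - x"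
      using eventually_gt_at_top[of 0] by eventually_elim simp
  qed
  then show ?thesis by (simp add: LIM_zero_iff)
qed

lemma tendsto_scaled_kantorovich_linear_moment:
  assumes "(\<lambda>n. real n * (y n - x)) \<longlonglongrightarrow> c"
  shows "(\<lambda>n. real n * kantorovich n (\<lambda>t. t - x) (y n)) \<longlonglongrightarrow> c + 1/2 - x"
proof -
  have "real n * kantorovich n (\<lambda>t. t - x) (y n) =
      real n / (real n + 1) * (real n * (y n - x) + 1/2 - x)" for n
  proof -
    have "(N - 1) * ((N - 1) * z / N + 1 / (2 * N) - x) = (N - 1) / N * ((N - 1) * (z - x) + 1/2 - x)"
      if "N > 0" for N z :: real
      using that by (simp add: field_simps)
    from this[of "real n + 1" "y n"] show ?thesis by (simp add: kantorovich_linear_moment)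
  qed
  moreover have "(\<lambda>n. real n / (real n + 1)) \<longlonglongrightarrow> 1" by real_asymp
  then have "(\<lambda>n. real n / (real n + 1) * (real n * (y n - x) + 1/2 - x)) \<longlonglongrightarrow> 1 * (c + 1/2 - x)"
    by (intro tendsto_intros assms)
  ultimately show ?thesis by simp
qed

lemma tendsto_scaled_kantorovich_quadratic_moment:
  assumes "(\<lambda>n. real n * (y n - x)) \<longlonglongrightarrow> c"
  shows "(\<lambda>n. real n * kantorovich n (\<lambda>t. (t - x)^2) (y n)) \<longlonglongrightarrow> x * (1 - x)"
proof -
  have "real n * kantorovich n (\<lambda>t. (t - x)^2) (y n) =
      real n / (real n + 1)^2 * ((real n * (y n - x) - x)^2 + (real n * (y n - x) - x) + 1/3)
      + (real n / (real n + 1))^2 * (y n * (1 - y n))" for n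
  proof -
    have "(N - 1) * ((N - 1) * (N - 2) * z^2 * (1 / N^2) + (N - 1) * z * (2 / N^2 - 2 * x / N)
          + (x^2 - x / N + 1 / (3 * N^2)))
        = (N - 1) / N^2 * (((N - 1) * (z - x) - x)^2 + ((N - 1) * (z - x) - x) + 1/3)
          + ((N - 1) / N)^2 * (z * (1 - z))"
      if "N > 0" for N z :: real
      using that by (simp add: field_simps power2_eq_square)
    from this[of "real n + 1" "y n"] show ?thesis
      unfolding kantorovich_quadratic_moment by (simp add: algebra_simps)
  qed
  moreover have "(\<lambda>n. real n / (real n + 1)) \<longlonglongrightarrow> 1" "(\<lambda>n. real n / (real n + 1)^2) \<longlonglongrightarrow> 0"
    by real_asymp+
  then have "(\<lambda>n. real n / (real n + 1)^2 * ((real n * (y n - x) - x)^2 + (real n * (y n - x) - x) + 1/3)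
      + (real n / (real n + 1))^2 * (y n * (1 - y n)))
      \<longlonglongrightarrow> 0 * ((c - x)^2 + (c - x) + 1/3) + 1^2 * (x * (1 - x))"
    by (intro tendsto_intros assms LIMSEQ_of_scaled_difference[OF assms])
  ultimately show ?thesis by simp
qed

section \<open>Voronovskaya's formula at a moving node\<close>

definition bernstein_tail :: "nat \<Rightarrow> real \<Rightarrow> real \<Rightarrow> real" where
  "bernstein_tail n y \<eta> = (\<Sum>k=0..n. p_nk n k y * of_bool (\<eta> \<le> \<bar>real k / real n - y\<bar>))"

lemma bernstein_tail_le:
  assumes y: "y \<in> {0..1}" and n: "n > 0" and \<eta>: "\<eta> \<ge> 0"
  shows "bernstein_tail n y \<eta> \<le> 2 * exp (-2 * real n * \<eta>^2)"
proof -
  let ?A = "{k\<in>{0..n}. \<eta> \<le> \<bar>real k / real n - y\<bar>}"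
  have "bernstein_tail n y \<eta> = (\<Sum>k\<in>?A. p_nk n k y)"
    unfolding bernstein_tail_def sum.inter_filter[OF finite_atLeastAtMost] by (intro sum.cong) auto
  also have "\<dots> = (\<Sum>k\<in>?A. pmf (binomial_pmf n y) k)"
    using y by (intro sum.cong) (auto simp: p_nk_def)
  also have "\<dots> = measure_pmf.prob (binomial_pmf n y) ?A"
    by (rule measure_measure_pmf_finite[symmetric]) simp
  also have "\<dots> \<le> measure_pmf.prob (binomial_pmf n y) {k. \<eta> \<le> \<bar>real k / real n - y\<bar>}"
    by (intro measure_pmf.finite_measure_mono) auto
  also have "\<dots> \<le> 2 * exp (real_of_int (- 2 * int n) * \<eta>\<^sup>2)"
    by (rule binomial_distribution.prob_abs_ge'[OF _ n \<eta>]) (unfold_locales, rule y)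
  finally show ?thesis by simp
qed

lemma tendsto_scaled_bernstein_tail:
  assumes y: "\<And>n. y n \<in> {0..1}" and \<eta>: "\<eta> > 0"
  shows "(\<lambda>n. real n * bernstein_tail n (y n) \<eta>) \<longlonglongrightarrow> 0"
proof (rule tendsto_sandwich)
  have "0 \<le> bernstein_tail n (y n) \<eta>" for n
    unfolding bernstein_tail_def by (intro sum_nonneg mult_nonneg_nonneg p_nk_nonneg y) simp
  then show "\<forall>\<^sub>F n in sequentially. 0 \<le> real n * bernstein_tail n (y n) \<eta>"
    by simp
  show "\<forall>\<^sub>F n in sequentially. real n * bernstein_tail n (y n) \<eta> \<le> real n * (2 * exp (-2 * real n * \<eta>^2))"
    using eventually_gt_at_top[of 0]
    by eventually_elim (use y \<eta> bernstein_tail_le in \<open>simp add: mult_left_mono\<close>)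
  have "(\<lambda>n. real n * (2 * exp (-2 * real n * a))) \<longlonglongrightarrow> 0" if "a > 0" for a :: real
    using that by real_asymp
  then show "(\<lambda>n. real n * (2 * exp (-2 * real n * \<eta>^2))) \<longlonglongrightarrow> 0"
    using \<eta> by simp
qed auto

lemma dist_kantorovich_cell_node:
  assumes n: "0 < n" and k: "k \<le> n" and t: "t \<in> kantorovich_cell n k"
  shows "\<bar>t - real k / real n\<bar> \<le> 1 / (real n + 1)"
proof -
  have "real k / real n - real k / (real n + 1) = real k / (real n * (real n + 1))"
    using n by (simp add: field_simps)
  also have "\<dots> \<le> real n / (real n * (real n + 1))"
    using k by (intro divide_right_mono) auto
  also have "\<dots> = 1 / (real n + 1)"
    using n by simp
  finally have "real k / real n - real k / (real n + 1) \<le> 1 / (real n + 1)" .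
  moreover have "real k / (real n + 1) \<le> real k / real n"
    using n by (simp add: frac_le)
  moreover have "(real k + 1) / (real n + 1) = real k / (real n + 1) + 1 / (real n + 1)"
    by (simp add: add_divide_distrib)
  ultimately show ?thesis using t by (auto simp: kantorovich_cell_def)
qed

lemma abs_scaled_integral_kantorovich_cell_le:
  fixes h B :: "real \<Rightarrow> real"
  assumes "continuous_on {0..1} h" "continuous_on {0..1} B" "k \<le> n"
    and "\<And>t. t \<in> kantorovich_cell n k \<Longrightarrow> \<bar>h t\<bar> \<le> B t"
  shows "\<bar>(real n + 1) * integral (kantorovich_cell n k) h\<bar>
    \<le> (real n + 1) * integral (kantorovich_cell n k) B"
proof -
  have "norm (integral (kantorovich_cell n k) h) \<le> integral (kantorovich_cell n k) B"
    by (rule Henstock_Kurzweil_Integration.integral_norm_bound_integral)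
      (use assms integrable_on_kantorovich_cell in auto)
  then show ?thesis by (simp add: abs_mult)
qed

lemma abs_scaled_integral_kantorovich_cell_remainder_le:
  fixes R :: "real \<Rightarrow> real"
  assumes R: "continuous_on {0..1} R"
    and M: "\<And>t. t \<in> {0..1} \<Longrightarrow> \<bar>R t\<bar> \<le> M"
    and \<epsilon>: "\<epsilon> \<ge> 0"
    and near: "\<And>t. t \<in> {0..1} \<Longrightarrow> \<bar>t - x\<bar> < \<delta> \<Longrightarrow> \<bar>R t\<bar> \<le> \<epsilon> * (t - x)^2"
    and n: "n > 0" and k: "k \<le> n"
    and yx: "\<bar>y - x\<bar> < \<delta> / 3" and n\<delta>: "1 / (real n + 1) < \<delta> / 3"
  shows "\<bar>(real n + 1) * integral (kantorovich_cell n k) R\<bar> \<le>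
    \<epsilon> * ((real n + 1) * integral (kantorovich_cell n k) (\<lambda>t. (t - x)^2))
    + M * of_bool (\<delta> / 3 \<le> \<bar>real k / real n - y\<bar>)"
proof (cases "\<delta> / 3 \<le> \<bar>real k / real n - y\<bar>")
  case True
  have "\<bar>(real n + 1) * integral (kantorovich_cell n k) R\<bar>
      \<le> (real n + 1) * integral (kantorovich_cell n k) (\<lambda>t. M)"
    using M kantorovich_cell_subset[OF k]
    by (intro abs_scaled_integral_kantorovich_cell_le R k continuous_intros) auto
  moreover have "0 \<le> \<epsilon> * ((real n + 1) * integral (kantorovich_cell n k) (\<lambda>t. (t - x)^2))"
    using \<epsilon> by (intro mult_nonneg_nonneg integral_nonneg integrable_on_kantorovich_cell
        continuous_intros k) auto
  ultimately show ?thesis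
    using True by (simp add: scaled_integral_kantorovich_cell_const)
next
  case False
  have "\<bar>R t\<bar> \<le> \<epsilon> * (t - x)^2" if t: "t \<in> kantorovich_cell n k" for t
  proof (rule near)
    show "t \<in> {0..1}" using t kantorovich_cell_subset[OF k] by auto
    show "\<bar>t - x\<bar> < \<delta>"
      using dist_kantorovich_cell_node[OF n k t] False yx n\<delta> by linarith
  qed
  then have "\<bar>(real n + 1) * integral (kantorovich_cell n k) R\<bar>
      \<le> (real n + 1) * integral (kantorovich_cell n k) (\<lambda>t. \<epsilon> * (t - x)^2)"
    by (intro abs_scaled_integral_kantorovich_cell_le R k continuous_intros)
  then show ?thesis using False by (simp add: mult.left_commute)
qed

lemma kantorovich_remainder_bound:
  fixes R :: "real \<Rightarrow> real"
  assumes R: "continuous_on {0..1} R"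
    and M: "\<And>t. t \<in> {0..1} \<Longrightarrow> \<bar>R t\<bar> \<le> M"
    and \<epsilon>: "\<epsilon> \<ge> 0"
    and near: "\<And>t. t \<in> {0..1} \<Longrightarrow> \<bar>t - x\<bar> < \<delta> \<Longrightarrow> \<bar>R t\<bar> \<le> \<epsilon> * (t - x)^2"
    and y: "y \<in> {0..1}" and n: "n > 0"
    and yx: "\<bar>y - x\<bar> < \<delta> / 3" and n\<delta>: "1 / (real n + 1) < \<delta> / 3"
  shows "\<bar>kantorovich n R y\<bar> \<le>
    \<epsilon> * kantorovich n (\<lambda>t. (t - x)^2) y + M * bernstein_tail n y (\<delta> / 3)"
proof -
  have "\<bar>kantorovich n R y\<bar> \<le> (\<Sum>k=0..n. p_nk n k y *
      (\<epsilon> * ((real n + 1) * integral (kantorovich_cell n k) (\<lambda>t. (t - x)^2))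
       + M * of_bool (\<delta> / 3 \<le> \<bar>real k / real n - y\<bar>)))"
    unfolding kantorovich_def
    using abs_scaled_integral_kantorovich_cell_remainder_le[OF R M \<epsilon> near n _ yx n\<delta>]
      p_nk_nonneg[OF y]
    by (intro order_trans[OF sum_abs sum_mono]) (simp add: abs_mult mult_left_mono)
  also have "\<dots> = \<epsilon> * kantorovich n (\<lambda>t. (t - x)^2) y + M * bernstein_tail n y (\<delta> / 3)"
    unfolding kantorovich_def bernstein_tail_def sum_distrib_left sum.distrib[symmetric]
    by (intro sum.cong) (simp_all add: algebra_simps)
  finally show ?thesis .
qed

lemma tendsto_scaled_kantorovich_remainder:
  fixes R :: "real \<Rightarrow> real"
  assumes R: "continuous_on {0..1} R"
    and small: "\<And>\<epsilon>. \<epsilon> > 0 \<Longrightarrow> \<exists>\<delta>>0. \<forall>t\<in>{0..1}. \<bar>t - x\<bar> < \<delta> \<longrightarrow> \<bar>R t\<bar> \<le> \<epsilon> * (t - x)^2"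
    and y: "\<And>n. y n \<in> {0..1}"
    and yx: "(\<lambda>n. real n * (y n - x)) \<longlonglongrightarrow> c"
  shows "(\<lambda>n. real n * kantorovich n R (y n)) \<longlonglongrightarrow> 0"
proof (rule tendstoI)
  fix e :: real
  assume e: "e > 0"
  have "bounded (R ` {0..1})"
    by (intro compact_imp_bounded compact_continuous_image R) simp
  then obtain M where "\<forall>t\<in>{0..1}. \<bar>R t\<bar> \<le> M"
    by (auto simp: bounded_iff)
  then have M: "\<And>t. t \<in> {0..1} \<Longrightarrow> \<bar>R t\<bar> \<le> M" by blast
  define B where "B = \<bar>x * (1 - x)\<bar> + 1"
  define \<epsilon> where "\<epsilon> = e / (2 * B)"
  have B: "B > 0" by (simp add: B_def add_nonneg_pos)
  then have \<epsilon>: "\<epsilon> > 0" and \<epsilon>B: "\<epsilon> * B = e / 2"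
    using e by (simp_all add: \<epsilon>_def)
  obtain \<delta> where \<delta>: "\<delta> > 0" and near: "\<forall>t\<in>{0..1}. \<bar>t - x\<bar> < \<delta> \<longrightarrow> \<bar>R t\<bar> \<le> \<epsilon> * (t - x)^2"
    using small[OF \<epsilon>] by blast
  have "\<forall>\<^sub>F n in sequentially. real n * kantorovich n (\<lambda>t. (t - x)^2) (y n) < B"
    by (rule order_tendstoD(2)[OF tendsto_scaled_kantorovich_quadratic_moment[OF yx]])
      (simp add: B_def)
  moreover have "(\<lambda>n. M * (real n * bernstein_tail n (y n) (\<delta> / 3))) \<longlonglongrightarrow> M * 0"
    using \<delta> by (intro tendsto_mult tendsto_const tendsto_scaled_bernstein_tail y) simp
  then have "\<forall>\<^sub>F n in sequentially. M * (real n * bernstein_tail n (y n) (\<delta> / 3)) < e / 2"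
    by (rule order_tendstoD(2)) (use e in simp)
  moreover have "\<forall>\<^sub>F n in sequentially. \<bar>y n - x\<bar> < \<delta> / 3"
    using tendstoD[OF LIMSEQ_of_scaled_difference[OF yx], of "\<delta> / 3"] \<delta>
    by (simp add: dist_real_def)
  moreover have "(\<lambda>n. 1 / (real n + 1)) \<longlonglongrightarrow> 0" by real_asymp
  then have "\<forall>\<^sub>F n in sequentially. 1 / (real n + 1) < \<delta> / 3"
    by (rule order_tendstoD(2)) (use \<delta> in simp)
  ultimately show "\<forall>\<^sub>F n in sequentially. dist (real n * kantorovich n R (y n)) 0 < e"
    using eventually_gt_at_top[of 0]
  proof eventually_elim
    case (elim n)
    have bound: "\<bar>kantorovich n R (y n)\<bar> \<le>
        \<epsilon> * kantorovich n (\<lambda>t. (t - x)^2) (y n) + M * bernstein_tail n (y n) (\<delta> / 3)"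
      using near elim \<epsilon> by (intro kantorovich_remainder_bound[OF R M _ _ y]) auto
    have "\<bar>real n * kantorovich n R (y n)\<bar> \<le>
        \<epsilon> * (real n * kantorovich n (\<lambda>t. (t - x)^2) (y n))
        + M * (real n * bernstein_tail n (y n) (\<delta> / 3))"
      using mult_left_mono[OF bound, of "real n"] by (simp add: abs_mult algebra_simps)
    also have "\<dots> < e / 2 + e / 2"
      using mult_strict_left_mono[OF elim(1) \<epsilon>] \<epsilon>B elim(2) by linarith
    finally show ?case by (simp add: dist_real_def)
  qed
qed

lemma quadratic_taylor_remainder_small:
  fixes g g' :: "real \<Rightarrow> real"
  assumes g: "\<And>t. t \<in> {0..1} \<Longrightarrow> (g has_real_derivative g' t) (at t within {0..1})"
    and g': "(g' has_real_derivative D) (at x within {0..1})"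
    and x: "x \<in> {0..1}" and \<epsilon>: "\<epsilon> > 0"
  shows "\<exists>\<delta>>0. \<forall>t\<in>{0..1}. \<bar>t - x\<bar> < \<delta> \<longrightarrow>
           \<bar>g t - g x - g' x * (t - x) - D / 2 * (t - x)^2\<bar> \<le> \<epsilon> * (t - x)^2"
proof -
  obtain \<delta> where \<delta>: "\<delta> > 0" and g'_lin: "\<And>s. s \<in> {0..1} \<Longrightarrow> \<bar>s - x\<bar> < \<delta> \<Longrightarrow>
      \<bar>g' s - g' x - D * (s - x)\<bar> \<le> \<epsilon> * \<bar>s - x\<bar>"
    using g' \<epsilon> unfolding has_field_derivative_def has_derivative_within_alt
    by (fastforce simp: mult.commute)
  show ?thesis
  proof (intro exI[of _ \<delta>] conjI \<delta> ballI impI)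
    fix t assume t: "t \<in> {0..1}" and tx: "\<bar>t - x\<bar> < \<delta>"
    define S where "S = {0..1} \<inter> cball x \<bar>t - x\<bar>"
    define r where "r s = g s - g x - g' x * (s - x) - D / 2 * (s - x)^2" for s
    have "norm (r t - r x) \<le> (\<epsilon> * \<bar>t - x\<bar>) * norm (t - x)"
    proof (rule field_differentiable_bound)
      show "convex S" unfolding S_def by (intro convex_Int convex_cball convex_real_interval)
      show "t \<in> S" "x \<in> S" using t x by (auto simp: S_def dist_real_def)
      fix s assume s: "s \<in> S"
      then have s01: "s \<in> {0..1}" and sx: "\<bar>s - x\<bar> \<le> \<bar>t - x\<bar>"
        by (auto simp: S_def dist_real_def)
      have "(g has_real_derivative g' s) (at s within S)"
        using g[OF s01] by (rule has_field_derivative_subset) (simp add: S_def)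
      then show "(r has_field_derivative (g' s - g' x - D * (s - x))) (at s within S)"
        unfolding r_def by (auto intro!: derivative_eq_intros)
      have "\<bar>g' s - g' x - D * (s - x)\<bar> \<le> \<epsilon> * \<bar>s - x\<bar>"
        using g'_lin s01 sx tx by simp
      also have "\<dots> \<le> \<epsilon> * \<bar>t - x\<bar>" using sx \<epsilon> by simp
      finally show "norm (g' s - g' x - D * (s - x)) \<le> \<epsilon> * \<bar>t - x\<bar>" by simp
    qed
    then show "\<bar>g t - g x - g' x * (t - x) - D / 2 * (t - x)^2\<bar> \<le> \<epsilon> * (t - x)^2"
      by (simp add: r_def power2_eq_square abs_mult_self_eq)
  qed
qed

lemma kantorovich_voronovskaya:
  fixes g g' :: "real \<Rightarrow> real"
  assumes g: "\<And>t. t \<in> {0..1} \<Longrightarrow> (g has_real_derivative g' t) (at t within {0..1})"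
    and g': "(g' has_real_derivative D) (at x within {0..1})"
    and x: "x \<in> {0..1}"
    and y: "\<And>n. y n \<in> {0..1}"
    and yx: "(\<lambda>n. real n * (y n - x)) \<longlonglongrightarrow> c"
  shows "(\<lambda>n. real n * (kantorovich n g (y n) - g x))
    \<longlonglongrightarrow> g' x * (c + 1/2 - x) + D / 2 * (x * (1 - x))"
proof -
  define R where "R t = g t - g x - g' x * (t - x) - D / 2 * (t - x)^2" for t
  have "continuous_on {0..1} g" using g by (rule DERIV_continuous_on)
  then have R_cont: "continuous_on {0..1} R" unfolding R_def by (intro continuous_intros)
  have expand: "kantorovich n g z = g x + g' x * kantorovich n (\<lambda>t. t - x) z
      + D / 2 * kantorovich n (\<lambda>t. (t - x)^2) z + kantorovich n R z" for n z
  proof -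
    have "kantorovich n g z =
        kantorovich n (\<lambda>t. g x + (g' x * (t - x) + (D / 2 * (t - x)^2 + R t))) z"
      by (simp add: R_def)
    also have "\<dots> = g x + g' x * kantorovich n (\<lambda>t. t - x) z
        + D / 2 * kantorovich n (\<lambda>t. (t - x)^2) z + kantorovich n R z"
      by (subst kantorovich_add, (intro continuous_intros R_cont)+)+
        (simp only: kantorovich_const kantorovich_cmult add.assoc)
    finally show ?thesis .
  qed
  have "(\<lambda>n. g' x * (real n * kantorovich n (\<lambda>t. t - x) (y n))
      + D / 2 * (real n * kantorovich n (\<lambda>t. (t - x)^2) (y n)) + real n * kantorovich n R (y n))
      \<longlonglongrightarrow> g' x * (c + 1/2 - x) + D / 2 * (x * (1 - x)) + 0"
    using quadratic_taylor_remainder_small[OF g g' x]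
    by (intro tendsto_intros tendsto_scaled_kantorovich_linear_moment[OF yx]
        tendsto_scaled_kantorovich_quadratic_moment[OF yx]
        tendsto_scaled_kantorovich_remainder[OF R_cont _ y yx]) (simp add: R_def)
  then show ?thesis by (simp add: expand algebra_simps)
qed

section \<open>The logarithmically modified operator\<close>

lemma a_succ_range:
  assumes "\<mu> > 0" "x \<in> {0..1}"
  shows "a_succ \<mu> n x \<in> {0..1}"
proof -
  define m where "m = (real n + 1) * (1 + \<mu>)"
  have m: "m > 0" using assms by (simp add: m_def)
  have "0 \<le> x / m" "x / m \<le> 1 / m" using assms m by (simp_all add: divide_right_mono)
  then have "0 \<le> ln (1 + x / m)" "ln (1 + x / m) \<le> ln (1 + 1 / m)"
    by simp_all
  moreover have "0 < ln (1 + 1/m)" using m by (intro ln_gt_zero) simp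
  ultimately show ?thesis unfolding a_succ_def m_def[symmetric]
    by (simp add: divide_le_eq_1)
qed

lemma a_succ_asymptotics:
  assumes "\<mu> > 0" "x \<in> {0..1}"
  shows "(\<lambda>n. real n * (a_succ \<mu> n x - x)) \<longlonglongrightarrow> x * (1 - x) / (2 * (1 + \<mu>))"
proof -
  consider "x = 0" | "x = 1" | "0 < x" "x < 1" using assms by force
  then show ?thesis
  proof cases
    case 1
    then show ?thesis by (simp add: a_succ_def)
  next
    case 2
    have "a_succ \<mu> n 1 = 1" for n
    proof -
      have "0 < ln (1 + 1 / ((real n + 1) * (1 + \<mu>)))"
        using assms by (intro ln_gt_zero) (simp add: add_pos_pos)
      then show ?thesis by (simp add: a_succ_def)
    qed
    then show ?thesis using 2 by simp
  next
    case 3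
    \<comment> \<open>real_asymp needs the positive parameter 1 + mu as a single variable.\<close>
    have "(\<lambda>n. real n * (ln (1 + x / ((real n + 1) * m)) / ln (1 + 1 / ((real n + 1) * m)) - x))
        \<longlonglongrightarrow> x * (1 - x) / (2 * m)" if "0 < m" for m
      using 3 that by (real_asymp simp: field_simps)
    from this[of "1 + \<mu>"] show ?thesis using assms by (simp add: a_succ_def)
  qed
qed

lemma LK_eq_kantorovich: "LK \<mu> n f x = ln_mu \<mu> x * kantorovich n (f_mu \<mu> f) (a_succ \<mu> n x)"
  by (simp add: LK_def kantorovich_def kantorovich_cell_def)

theorem theorem4p1:
  fixes \<mu> :: real and f f' f'' g' g'' :: "real \<Rightarrow> real" and x :: real
  assumes mu: "\<mu> > 0"
    and f1: "\<And>t. t \<in> {0..1} \<Longrightarrow> (f has_real_derivative f' t) (at t within {0..1})"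
    and f2: "\<And>t. t \<in> {0..1} \<Longrightarrow> (f' has_real_derivative f'' t) (at t within {0..1})"
    and f2c: "continuous_on {0..1} f''"
    and g1: "\<And>t. t \<in> {0..1} \<Longrightarrow> (f_mu \<mu> f has_real_derivative g' t) (at t within {0..1})"
    and g2: "\<And>t. t \<in> {0..1} \<Longrightarrow> (g' has_real_derivative g'' t) (at t within {0..1})"
    and x: "x \<in> {0..1}"
  shows "(\<lambda>n. real n * (LK \<mu> n f x - f x)) \<longlonglongrightarrow>
    ln_mu \<mu> x * (g' x * (1/2 + (x - x^2) / (2 * (1 + \<mu>)) - x) + g'' x * ((x - x^2) / 2))"
proof -
  \<comment> \<open>Only the smoothness of f_mu enters.\<close>
  have ln_pos: "ln_mu \<mu> x > 0" using mu x by (simp add: ln_mu_def)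
  have scaled_error: "real n * (LK \<mu> n f x - f x) =
      ln_mu \<mu> x * (real n * (kantorovich n (f_mu \<mu> f) (a_succ \<mu> n x) - f_mu \<mu> f x))" for n
    using ln_pos by (simp add: LK_eq_kantorovich f_mu_def algebra_simps)
  have limit: "ln_mu \<mu> x * (g' x * (x * (1 - x) / (2 * (1 + \<mu>)) + 1/2 - x) + g'' x / 2 * (x * (1 - x)))
      = ln_mu \<mu> x * (g' x * (1/2 + (x - x^2) / (2 * (1 + \<mu>)) - x) + g'' x * ((x - x^2) / 2))"
    by (simp add: algebra_simps power2_eq_square)
  show ?thesis
    unfolding scaled_error limit[symmetric]
    by (intro tendsto_mult_left kantorovich_voronovskaya[OF g1 g2[OF x] x a_succ_range[OF mu x]
          a_succ_asymptotics[OF mu x]])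
qed

end
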